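(* With $S$, $\hat f^i$, $\mathbf{K}$, $d_S$, $M(v)$ as in the context, let $v\in M_\mathbf{K}$ be an archimedean place. Then for every $\ell\ge1$ and every sequence $g^1,\dots,g^\ell\in S$, the endomorphism $\hat w=\hat g^\ell\circ\cdots\circ\hat g^1$ of $\mathbb{A}^{m+1}$ satisfies $\log|\hat w|_v\le 2\log(M(v))\,d_S^\ell+\log(m\,d_S^m)\,d_S^{2\ell}$.
   Context: For a number field $\mathbf{K}$, $M_\mathbf{K}$ is its set of places, with absolute values normalized by $|x|_v=|{\mathrm{Norm}}_{\mathbf{K}_v/\mathbf{Q}_p}(x)|_p^{1/[\mathbf{K}:\mathbf{Q}]}$ for $v$ above $p$ (prime or $\infty$). For $f=\sum_Ia_I\mathbf{x}^I\in\mathbf{K}[x_0,\dots,x_m]$, $|f|_v=\max_I|a_I|_v$; for $\hat f=(f_0,\dots,f_m)$, $|\hat f|_v=\max_i|f_i|_v$. Setup: $S=\{f^1,\dots,f^s\}$ is a finite symmetric subset of ${\sf{Bir}}(\mathbb{P}^m_{\overline{\mathbf{Q}}})$; each $f^i=[f^i_0:\dots:f^i_m]$ with $f^i_j$ homogeneous of degree $d_i=\deg f^i$ without common factor, normalized so that some coefficient equals $1$; $\hat f^i=(f^i_0,\dots,f^i_m)$. $\mathbf{K}$ is generated by all coefficients of the $f^i_j$; $M(v)=\max_i|\hat f^i|_v$; $d_S=\max\{2,d_1,\dots,d_s\}$. *)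

theory Defs
  imports Complex_Main "HOL-Library.Poly_Mapping" "HOL-Computational_Algebra.Polynomial"
begin

text \<open>Multivariate polynomials with coefficients in the algebraic closure of Q,
  viewed inside the complex numbers: a polynomial is a finitely supported map from
  exponent vectors (variable index to exponent) to coefficients.
  A polynomial map (f_0,...,f_m) is a function nat \<Rightarrow> mpoly (components j > m are zero).\<close>

type_synonym mpoly = "(nat \<Rightarrow>\<^sub>0 nat) \<Rightarrow>\<^sub>0 complex"
type_synonym pmap = "nat \<Rightarrow> mpoly"

definition Var :: "nat \<Rightarrow> mpoly" where
  "Var i = Poly_Mapping.single (Poly_Mapping.single i 1) 1"

definition Const :: "complex \<Rightarrow> mpoly" where
  "Const c = Poly_Mapping.single 0 c"

definition subst :: "mpoly \<Rightarrow> pmap \<Rightarrow> mpoly" where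
  "subst p F = (\<Sum>\<alpha>\<in>Poly_Mapping.keys p. Const (Poly_Mapping.lookup p \<alpha>) * (\<Prod>i\<in>Poly_Mapping.keys \<alpha>. F i ^ Poly_Mapping.lookup \<alpha> i))"

definition comp_map :: "pmap \<Rightarrow> pmap \<Rightarrow> pmap" where
  "comp_map G F = (\<lambda>j. subst (G j) F)"

definition tdeg :: "(nat \<Rightarrow>\<^sub>0 nat) \<Rightarrow> nat" where
  "tdeg \<alpha> = (\<Sum>i\<in>Poly_Mapping.keys \<alpha>. Poly_Mapping.lookup \<alpha> i)"

definition homog :: "nat \<Rightarrow> mpoly \<Rightarrow> bool" where
  "homog d p \<longleftrightarrow> (\<forall>\<alpha>\<in>Poly_Mapping.keys p. tdeg \<alpha> = d)"

definition vars_in :: "nat \<Rightarrow> mpoly \<Rightarrow> bool" where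
  "vars_in m p \<longleftrightarrow> (\<forall>\<alpha>\<in>Poly_Mapping.keys p. Poly_Mapping.keys \<alpha> \<subseteq> {..m})"

definition no_common_factor :: "nat \<Rightarrow> pmap \<Rightarrow> bool" where
  "no_common_factor m F \<longleftrightarrow> (\<forall>q. (\<forall>j\<le>m. q dvd F j) \<longrightarrow> (\<exists>c. q = Const c))"

definition hom_rep :: "nat \<Rightarrow> nat \<Rightarrow> pmap \<Rightarrow> bool" where
  "hom_rep m d F \<longleftrightarrow> (\<forall>j>m. F j = 0) \<and> (\<exists>j\<le>m. F j \<noteq> 0)
     \<and> (\<forall>j\<le>m. vars_in m (F j) \<and> homog d (F j)) \<and> no_common_factor m F"

definition map_deg :: "nat \<Rightarrow> pmap \<Rightarrow> nat" where
  "map_deg m F = (THE d. hom_rep m d F)"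

text \<open>G o F = id as rational maps of P^m: G(F(x)) = h(x) x with h nonzero.\<close>
definition left_inv :: "nat \<Rightarrow> pmap \<Rightarrow> pmap \<Rightarrow> bool" where
  "left_inv m G F \<longleftrightarrow> (\<exists>h. h \<noteq> 0 \<and> (\<forall>j\<le>m. comp_map G F j = h * Var j))"

definition birational :: "nat \<Rightarrow> pmap \<Rightarrow> bool" where
  "birational m F \<longleftrightarrow> (\<exists>d. hom_rep m d F) \<and>
     (\<exists>G d'. hom_rep m d' G \<and> left_inv m G F \<and> left_inv m F G)"

definition symmetric_set :: "nat \<Rightarrow> pmap set \<Rightarrow> bool" where
  "symmetric_set m S \<longleftrightarrow> (\<forall>F\<in>S. \<exists>G\<in>S. left_inv m G F \<and> left_inv m F G)"

definition normalized :: "nat \<Rightarrow> pmap \<Rightarrow> bool" where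
  "normalized m F \<longleftrightarrow> (\<exists>j\<le>m. \<exists>\<alpha>. Poly_Mapping.lookup (F j) \<alpha> = 1)"

definition coeffs :: "nat \<Rightarrow> pmap set \<Rightarrow> complex set" where
  "coeffs m S = {Poly_Mapping.lookup (F j) \<alpha> | F j \<alpha>. F \<in> S \<and> j \<le> m \<and> \<alpha> \<in> Poly_Mapping.keys (F j)}"

definition is_subfield :: "complex set \<Rightarrow> bool" where
  "is_subfield L \<longleftrightarrow> 0 \<in> L \<and> 1 \<in> L \<and> (\<forall>x\<in>L. \<forall>y\<in>L. x + y \<in> L \<and> x * y \<in> L)
     \<and> (\<forall>x\<in>L. - x \<in> L \<and> inverse x \<in> L)"

definition gen_field :: "complex set \<Rightarrow> complex set" where
  "gen_field A = \<Inter>{L. is_subfield L \<and> A \<subseteq> L}"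

definition q_basis :: "complex set \<Rightarrow> complex set \<Rightarrow> bool" where
  "q_basis K B \<longleftrightarrow> finite B \<and> B \<subseteq> K
     \<and> (\<forall>c. (\<Sum>b\<in>B. of_rat (c b) * b) = 0 \<longrightarrow> (\<forall>b\<in>B. c b = 0))
     \<and> K = {x. \<exists>c. x = (\<Sum>b\<in>B. of_rat (c b) * b)}"

definition field_degree :: "complex set \<Rightarrow> nat" where
  "field_degree K = (THE n. \<exists>B. q_basis K B \<and> card B = n)"

text \<open>Archimedean places of K correspond to field embeddings sigma : K \<rightarrow> C.\<close>
definition field_emb :: "complex set \<Rightarrow> (complex \<Rightarrow> complex) \<Rightarrow> bool" where
  "field_emb K \<sigma> \<longleftrightarrow> \<sigma> 1 = 1 \<and> (\<forall>x\<in>K. \<forall>y\<in>K. \<sigma> (x + y) = \<sigma> x + \<sigma> y \<and> \<sigma> (x * y) = \<sigma> x * \<sigma> y)"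

text \<open>[K_v : R] = 1 for a real place, 2 for a complex place.\<close>
definition local_deg :: "complex set \<Rightarrow> (complex \<Rightarrow> complex) \<Rightarrow> nat" where
  "local_deg K \<sigma> = (if \<sigma> ` K \<subseteq> \<real> then 1 else 2)"

text \<open>|x|_v = |Norm_{K_v/R}(sigma x)|^(1/[K:Q]) = |sigma x|^([K_v:R]/[K:Q]).\<close>
definition absv :: "complex set \<Rightarrow> (complex \<Rightarrow> complex) \<Rightarrow> complex \<Rightarrow> real" where
  "absv K \<sigma> x = cmod (\<sigma> x) powr (real (local_deg K \<sigma>) / real (field_degree K))"

definition poly_absv :: "complex set \<Rightarrow> (complex \<Rightarrow> complex) \<Rightarrow> mpoly \<Rightarrow> real" where
  "poly_absv K \<sigma> p = Max (insert 0 ((\<lambda>\<alpha>. absv K \<sigma> (Poly_Mapping.lookup p \<alpha>)) ` Poly_Mapping.keys p))"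

definition map_absv :: "complex set \<Rightarrow> (complex \<Rightarrow> complex) \<Rightarrow> nat \<Rightarrow> pmap \<Rightarrow> real" where
  "map_absv K \<sigma> m F = Max ((\<lambda>j. poly_absv K \<sigma> (F j)) ` {..m})"

end

theory Submission imports Defs "HOL-Library.FuncSet" begin

text \<open>Measure a polynomial by the sum of the absolute values of its coefficients
  after applying the embedding \<open>\<sigma>\<close>. This \<open>\<ell>\<^sup>1\<close>-norm is subadditive and submultiplicative,
  so substituting polynomials of norm at most \<open>L \<ge> 1\<close> into a form of degree \<open>d\<close>
  multiplies its norm by at most \<open>L\<^sup>d\<close>. A form of degree \<open>d \<le> d\<^sub>S\<close> in \<open>m + 1\<close> variables has
  at most \<open>(d\<^sub>S + 1)\<^sup>m\<close> monomials, so every component of a map of \<open>S\<close> has norm at most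
  \<open>B = (d\<^sub>S + 1)\<^sup>m C\<close>, where \<open>C\<close> bounds the embedded coefficients, and an \<open>\<ell>\<close>-fold
  composition has norm at most \<open>B\<^bsup>1 + d\<^sub>S + \<dots> + d\<^sub>S\<^bsup>\<ell>-1\<^esup>\<^esup> \<le> B\<^bsup>d\<^sub>S\<^bsup>\<ell>\<^esup> - 1\<^esup>\<close>. Since
  \<open>|x|\<^sub>v = |\<sigma> x|\<^sup>e\<close> with \<open>e \<le> 2\<close>, taking logarithms gives the bound.\<close>

lemma poly_mapping_monomial_expansion:
  fixes p :: "'a \<Rightarrow>\<^sub>0 'b::comm_monoid_add"
  shows "p = (\<Sum>a\<in>Poly_Mapping.keys p. Poly_Mapping.single a (Poly_Mapping.lookup p a))"
proof (rule poly_mapping_eqI)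
  fix k
  show "Poly_Mapping.lookup p k
      = Poly_Mapping.lookup (\<Sum>a\<in>Poly_Mapping.keys p. Poly_Mapping.single a (Poly_Mapping.lookup p a)) k"
    unfolding lookup_sum lookup_single
    by (cases "k \<in> Poly_Mapping.keys p") (auto simp: when_def in_keys_iff)
qed

lemma poly_mapping_mult_expansion:
  fixes p q :: "'a::comm_monoid_add \<Rightarrow>\<^sub>0 'b::comm_semiring_1"
  shows "p * q = (\<Sum>a\<in>Poly_Mapping.keys p. \<Sum>b\<in>Poly_Mapping.keys q.
           Poly_Mapping.single (a + b) (Poly_Mapping.lookup p a * Poly_Mapping.lookup q b))"
proof -
  have "p * q = (\<Sum>a\<in>Poly_Mapping.keys p. Poly_Mapping.single a (Poly_Mapping.lookup p a)) *
      (\<Sum>b\<in>Poly_Mapping.keys q. Poly_Mapping.single b (Poly_Mapping.lookup q b))"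
    by (metis poly_mapping_monomial_expansion)
  then show ?thesis
    by (simp add: sum_product mult_single)
qed

definition coeffs_in :: "'b set \<Rightarrow> ('a \<Rightarrow>\<^sub>0 'b::zero) \<Rightarrow> bool" where
  "coeffs_in K p \<longleftrightarrow> (\<forall>\<alpha>. Poly_Mapping.lookup p \<alpha> \<in> K)"

definition l1_norm :: "('b \<Rightarrow> 'c::real_normed_vector) \<Rightarrow> ('a \<Rightarrow>\<^sub>0 'b::zero) \<Rightarrow> real" where
  "l1_norm \<sigma> p = (\<Sum>\<alpha>\<in>Poly_Mapping.keys p. norm (\<sigma> (Poly_Mapping.lookup p \<alpha>)))"

lemma l1_norm_nonneg: "0 \<le> l1_norm \<sigma> p"
  by (simp add: l1_norm_def sum_nonneg)

lemma l1_norm_le_card_keys_mult: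
  fixes C :: real
  assumes "\<And>\<alpha>. norm (\<sigma> (Poly_Mapping.lookup p \<alpha>)) \<le> C"
  shows "l1_norm \<sigma> p \<le> card (Poly_Mapping.keys p) * C"
  using sum_bounded_above[of "Poly_Mapping.keys p" "\<lambda>\<alpha>. norm (\<sigma> (Poly_Mapping.lookup p \<alpha>))" C] assms
  by (simp add: l1_norm_def)

locale ring_hom_on =
  fixes K :: "'a::comm_semiring_1 set" and \<sigma> :: "'a \<Rightarrow> 'b::real_normed_div_algebra"
  assumes zero_mem: "0 \<in> K" and one_mem: "1 \<in> K"
    and add_mem: "x \<in> K \<Longrightarrow> y \<in> K \<Longrightarrow> x + y \<in> K"
    and mult_mem: "x \<in> K \<Longrightarrow> y \<in> K \<Longrightarrow> x * y \<in> K"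
    and hom_one: "\<sigma> 1 = 1"
    and hom_add: "x \<in> K \<Longrightarrow> y \<in> K \<Longrightarrow> \<sigma> (x + y) = \<sigma> x + \<sigma> y"
    and hom_mult: "x \<in> K \<Longrightarrow> y \<in> K \<Longrightarrow> \<sigma> (x * y) = \<sigma> x * \<sigma> y"
begin

lemma hom_zero: "\<sigma> 0 = 0"
  using hom_add[OF zero_mem zero_mem] by simp

lemma coeff_le_l1_norm: "norm (\<sigma> (Poly_Mapping.lookup p \<alpha>)) \<le> l1_norm \<sigma> p"
proof (cases "\<alpha> \<in> Poly_Mapping.keys p")
  case True
  then show ?thesis unfolding l1_norm_def by (intro member_le_sum) auto
next
  case False
  then show ?thesis by (simp add: in_keys_iff hom_zero l1_norm_nonneg)
qed

lemma l1_norm_eq_sum_over_superset: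
  assumes "finite A" "Poly_Mapping.keys p \<subseteq> A"
  shows "l1_norm \<sigma> p = (\<Sum>\<alpha>\<in>A. norm (\<sigma> (Poly_Mapping.lookup p \<alpha>)))"
  unfolding l1_norm_def
  by (rule sum.mono_neutral_left) (use assms in \<open>auto simp: in_keys_iff hom_zero\<close>)

lemma l1_norm_single: "l1_norm \<sigma> (Poly_Mapping.single a c) = norm (\<sigma> c)"
  by (simp add: l1_norm_def hom_zero)

lemma l1_norm_one: "l1_norm \<sigma> 1 = 1"
  by (metis l1_norm_single hom_one norm_one single_one)

lemma coeffs_in_zero: "coeffs_in K 0"
  by (simp add: coeffs_in_def zero_mem)

lemma coeffs_in_one: "coeffs_in K 1"
  by (simp add: coeffs_in_def lookup_one when_def zero_mem one_mem)

lemma coeffs_in_single: "c \<in> K \<Longrightarrow> coeffs_in K (Poly_Mapping.single a c)"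
  by (simp add: coeffs_in_def lookup_single when_def zero_mem)

lemma coeffs_in_add: "coeffs_in K p \<Longrightarrow> coeffs_in K q \<Longrightarrow> coeffs_in K (p + q)"
  by (simp add: coeffs_in_def lookup_add add_mem)

lemma coeffs_in_sum: "finite A \<Longrightarrow> (\<And>a. a \<in> A \<Longrightarrow> coeffs_in K (f a)) \<Longrightarrow> coeffs_in K (sum f A)"
  by (induction A rule: finite_induct) (auto intro: coeffs_in_zero coeffs_in_add)

lemma l1_norm_add:
  assumes "coeffs_in K p" "coeffs_in K q"
  shows "l1_norm \<sigma> (p + q) \<le> l1_norm \<sigma> p + l1_norm \<sigma> q"
proof -
  let ?A = "Poly_Mapping.keys p \<union> Poly_Mapping.keys q"
  have "l1_norm \<sigma> (p + q) = (\<Sum>\<alpha>\<in>?A. norm (\<sigma> (Poly_Mapping.lookup (p + q) \<alpha>)))"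
    by (rule l1_norm_eq_sum_over_superset) (auto simp: keys_add)
  also have "\<dots> \<le> (\<Sum>\<alpha>\<in>?A. norm (\<sigma> (Poly_Mapping.lookup p \<alpha>)) + norm (\<sigma> (Poly_Mapping.lookup q \<alpha>)))"
    using assms by (intro sum_mono) (auto simp: lookup_add coeffs_in_def hom_add norm_triangle_ineq)
  also have "\<dots> = l1_norm \<sigma> p + l1_norm \<sigma> q"
    by (simp add: sum.distrib l1_norm_eq_sum_over_superset[of ?A p] l1_norm_eq_sum_over_superset[of ?A q])
  finally show ?thesis .
qed

lemma l1_norm_sum:
  "finite A \<Longrightarrow> (\<And>a. a \<in> A \<Longrightarrow> coeffs_in K (f a)) \<Longrightarrow>
   l1_norm \<sigma> (sum f A) \<le> (\<Sum>a\<in>A. l1_norm \<sigma> (f a))"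
proof (induction A rule: finite_induct)
  case (insert x A)
  then have "l1_norm \<sigma> (f x + sum f A) \<le> l1_norm \<sigma> (f x) + l1_norm \<sigma> (sum f A)"
    by (intro l1_norm_add coeffs_in_sum) auto
  with insert show ?case by simp
qed (simp add: l1_norm_def)

lemma coeffs_in_mult:
  fixes p q :: "'m::comm_monoid_add \<Rightarrow>\<^sub>0 'a"
  assumes "coeffs_in K p" "coeffs_in K q"
  shows "coeffs_in K (p * q)"
  unfolding poly_mapping_mult_expansion[of p q]
  using assms by (intro coeffs_in_sum coeffs_in_single finite_keys mult_mem) (auto simp: coeffs_in_def)

lemma l1_norm_mult:
  fixes p q :: "'m::comm_monoid_add \<Rightarrow>\<^sub>0 'a"
  assumes "coeffs_in K p" "coeffs_in K q"
  shows "l1_norm \<sigma> (p * q) \<le> l1_norm \<sigma> p * l1_norm \<sigma> q"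
proof -
  have K: "Poly_Mapping.lookup p a * Poly_Mapping.lookup q b \<in> K" for a b
    using assms by (auto simp: coeffs_in_def intro: mult_mem)
  have "l1_norm \<sigma> (p * q) \<le> (\<Sum>a\<in>Poly_Mapping.keys p. \<Sum>b\<in>Poly_Mapping.keys q.
      l1_norm \<sigma> (Poly_Mapping.single (a + b) (Poly_Mapping.lookup p a * Poly_Mapping.lookup q b)))"
    unfolding poly_mapping_mult_expansion[of p q]
    by (intro order_trans[OF l1_norm_sum] sum_mono l1_norm_sum coeffs_in_sum coeffs_in_single K finite_keys)
  also have "\<dots> = l1_norm \<sigma> p * l1_norm \<sigma> q"
    using assms unfolding l1_norm_single
    by (simp add: l1_norm_def sum_product coeffs_in_def hom_mult norm_mult)
  finally show ?thesis .
qed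

lemma coeffs_in_power: "coeffs_in K (p :: 'm::comm_monoid_add \<Rightarrow>\<^sub>0 'a) \<Longrightarrow> coeffs_in K (p ^ n)"
  by (induction n) (auto intro: coeffs_in_one coeffs_in_mult)

lemma l1_norm_power:
  fixes p :: "'m::comm_monoid_add \<Rightarrow>\<^sub>0 'a"
  assumes "coeffs_in K p"
  shows "l1_norm \<sigma> (p ^ n) \<le> l1_norm \<sigma> p ^ n"
proof (induction n)
  case (Suc n)
  have "l1_norm \<sigma> (p ^ Suc n) \<le> l1_norm \<sigma> p * l1_norm \<sigma> (p ^ n)"
    using assms by (simp add: l1_norm_mult coeffs_in_power)
  also have "\<dots> \<le> l1_norm \<sigma> p * l1_norm \<sigma> p ^ n"
    using Suc by (simp add: mult_left_mono l1_norm_nonneg)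
  finally show ?case by simp
qed (simp add: l1_norm_one)

lemma coeffs_in_prod:
  fixes f :: "'i \<Rightarrow> 'm::comm_monoid_add \<Rightarrow>\<^sub>0 'a"
  shows "finite A \<Longrightarrow> (\<And>a. a \<in> A \<Longrightarrow> coeffs_in K (f a)) \<Longrightarrow> coeffs_in K (prod f A)"
  by (induction A rule: finite_induct) (auto intro: coeffs_in_one coeffs_in_mult)

lemma l1_norm_prod:
  fixes f :: "'i \<Rightarrow> 'm::comm_monoid_add \<Rightarrow>\<^sub>0 'a"
  shows "finite A \<Longrightarrow> (\<And>a. a \<in> A \<Longrightarrow> coeffs_in K (f a)) \<Longrightarrow>
   l1_norm \<sigma> (prod f A) \<le> (\<Prod>a\<in>A. l1_norm \<sigma> (f a))"
proof (induction A rule: finite_induct)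
  case (insert x A)
  then have "l1_norm \<sigma> (f x * prod f A) \<le> l1_norm \<sigma> (f x) * l1_norm \<sigma> (prod f A)"
    by (intro l1_norm_mult coeffs_in_prod) auto
  also have "\<dots> \<le> l1_norm \<sigma> (f x) * (\<Prod>a\<in>A. l1_norm \<sigma> (f a))"
    using insert by (simp add: mult_left_mono l1_norm_nonneg)
  finally show ?case using insert by simp
qed (simp add: l1_norm_one)

end

lemma lookup_le_tdeg: "Poly_Mapping.lookup \<alpha> i \<le> tdeg \<alpha>"
proof (cases "i \<in> Poly_Mapping.keys \<alpha>")
  case True
  then show ?thesis unfolding tdeg_def by (intro member_le_sum) auto
qed (simp add: in_keys_iff)

lemma tdeg_eq_sum_lessThan_plus_last:
  assumes "Poly_Mapping.keys \<alpha> \<subseteq> {..m}"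
  shows "tdeg \<alpha> = (\<Sum>i<m. Poly_Mapping.lookup \<alpha> i) + Poly_Mapping.lookup \<alpha> m"
proof -
  have "tdeg \<alpha> = (\<Sum>i\<le>m. Poly_Mapping.lookup \<alpha> i)"
    unfolding tdeg_def using assms by (intro sum.mono_neutral_left) (auto simp: in_keys_iff)
  then show ?thesis by (simp add: lessThan_Suc_atMost[symmetric])
qed

lemma card_keys_homog_le:
  assumes "vars_in m p" "homog d p"
  shows "card (Poly_Mapping.keys p) \<le> (d + 1) ^ m"
proof -
  \<comment> \<open>A monomial of degree \<open>d\<close> in \<open>x\<^sub>0, \<dots>, x\<^sub>m\<close> is determined by its first \<open>m\<close> exponents.\<close>
  let ?h = "\<lambda>\<alpha>::nat \<Rightarrow>\<^sub>0 nat. restrict (Poly_Mapping.lookup \<alpha>) {..<m}"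
  have keys: "Poly_Mapping.keys \<alpha> \<subseteq> {..m}" "tdeg \<alpha> = d" if "\<alpha> \<in> Poly_Mapping.keys p" for \<alpha>
    using assms that by (auto simp: vars_in_def homog_def)
  have "inj_on ?h (Poly_Mapping.keys p)"
  proof (rule inj_onI)
    fix \<alpha> \<beta> assume \<alpha>: "\<alpha> \<in> Poly_Mapping.keys p" and \<beta>: "\<beta> \<in> Poly_Mapping.keys p" and "?h \<alpha> = ?h \<beta>"
    then have low: "Poly_Mapping.lookup \<alpha> i = Poly_Mapping.lookup \<beta> i" if "i < m" for i
      using that by (metis restrict_apply' lessThan_iff)
    then have "Poly_Mapping.lookup \<alpha> m = Poly_Mapping.lookup \<beta> m"
      using tdeg_eq_sum_lessThan_plus_last[OF keys(1)[OF \<alpha>]] tdeg_eq_sum_lessThan_plus_last[OF keys(1)[OF \<beta>]] keys(2)[OF \<alpha>] keys(2)[OF \<beta>]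
      by simp
    moreover have "Poly_Mapping.lookup \<alpha> i = 0" "Poly_Mapping.lookup \<beta> i = 0" if "m < i" for i
      using keys(1)[OF \<alpha>] keys(1)[OF \<beta>] that by (auto simp: in_keys_iff)
    ultimately show "\<alpha> = \<beta>"
      by (intro poly_mapping_eqI) (metis low linorder_neqE_nat)
  qed
  moreover have "?h ` Poly_Mapping.keys p \<subseteq> PiE {..<m} (\<lambda>_. {..d})"
  proof clarify
    fix \<alpha> assume "\<alpha> \<in> Poly_Mapping.keys p"
    then have "Poly_Mapping.lookup \<alpha> i \<le> d" for i
      using keys(2) lookup_le_tdeg by metis
    then show "?h \<alpha> \<in> PiE {..<m} (\<lambda>_. {..d})" by auto
  qed
  ultimately have "card (Poly_Mapping.keys p) \<le> card (PiE {..<m} (\<lambda>_. {..d}))"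
    by (metis card_image card_mono finite_PiE finite_atMost finite_lessThan)
  then show ?thesis by (simp add: card_PiE)
qed

lemma l1_norm_monomial_subst_le:
  assumes "ring_hom_on K \<sigma>" "\<And>i. coeffs_in K (F i)" "Poly_Mapping.keys \<alpha> \<subseteq> {..m}"
    and "\<And>i. i \<le> m \<Longrightarrow> l1_norm \<sigma> (F i) \<le> L"
  shows "l1_norm \<sigma> (\<Prod>i\<in>Poly_Mapping.keys \<alpha>. F i ^ Poly_Mapping.lookup \<alpha> i) \<le> L ^ tdeg \<alpha>"
proof -
  interpret ring_hom_on K \<sigma> by fact
  have "l1_norm \<sigma> (\<Prod>i\<in>Poly_Mapping.keys \<alpha>. F i ^ Poly_Mapping.lookup \<alpha> i)
      \<le> (\<Prod>i\<in>Poly_Mapping.keys \<alpha>. l1_norm \<sigma> (F i ^ Poly_Mapping.lookup \<alpha> i))"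
    using assms(2) by (intro l1_norm_prod coeffs_in_power finite_keys)
  also have "\<dots> \<le> (\<Prod>i\<in>Poly_Mapping.keys \<alpha>. L ^ Poly_Mapping.lookup \<alpha> i)"
  proof (intro prod_mono conjI l1_norm_nonneg)
    fix i assume "i \<in> Poly_Mapping.keys \<alpha>"
    then have "l1_norm \<sigma> (F i) \<le> L" using assms(3,4) by auto
    then have "l1_norm \<sigma> (F i) ^ Poly_Mapping.lookup \<alpha> i \<le> L ^ Poly_Mapping.lookup \<alpha> i"
      by (intro power_mono l1_norm_nonneg)
    then show "l1_norm \<sigma> (F i ^ Poly_Mapping.lookup \<alpha> i) \<le> L ^ Poly_Mapping.lookup \<alpha> i"
      using l1_norm_power[OF assms(2)] by (rule order_trans[rotated])
  qed
  also have "\<dots> = L ^ tdeg \<alpha>"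
    by (simp add: tdeg_def power_sum)
  finally show ?thesis .
qed

lemma coeffs_in_subst:
  assumes "ring_hom_on K \<sigma>" "coeffs_in K p" "\<And>i. coeffs_in K (F i)"
  shows "coeffs_in K (subst p F)"
proof -
  interpret ring_hom_on K \<sigma> by fact
  show ?thesis
    unfolding subst_def Const_def using assms(2,3)
    by (intro coeffs_in_sum coeffs_in_mult coeffs_in_single coeffs_in_prod coeffs_in_power finite_keys)
      (auto simp: coeffs_in_def)
qed

lemma l1_norm_subst_le:
  assumes "ring_hom_on K \<sigma>" "coeffs_in K p" "\<And>i. coeffs_in K (F i)"
    and "vars_in m p" "homog d p" "\<And>i. i \<le> m \<Longrightarrow> l1_norm \<sigma> (F i) \<le> L"
  shows "l1_norm \<sigma> (subst p F) \<le> l1_norm \<sigma> p * L ^ d"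
proof -
  interpret ring_hom_on K \<sigma> by fact
  let ?c = "Poly_Mapping.lookup p" and ?mon = "\<lambda>\<alpha>. \<Prod>i\<in>Poly_Mapping.keys \<alpha>. F i ^ Poly_Mapping.lookup \<alpha> i"
  have cK: "?c \<alpha> \<in> K" for \<alpha> using assms(2) by (simp add: coeffs_in_def)
  have monK: "coeffs_in K (?mon \<alpha>)" for \<alpha>
    using assms(3) by (intro coeffs_in_prod coeffs_in_power finite_keys)
  have "l1_norm \<sigma> (subst p F) \<le> (\<Sum>\<alpha>\<in>Poly_Mapping.keys p. l1_norm \<sigma> (Const (?c \<alpha>) * ?mon \<alpha>))"
    unfolding subst_def Const_def using cK monK
    by (intro l1_norm_sum coeffs_in_mult coeffs_in_single finite_keys)
  also have "\<dots> \<le> (\<Sum>\<alpha>\<in>Poly_Mapping.keys p. norm (\<sigma> (?c \<alpha>)) * L ^ d)"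
  proof (rule sum_mono)
    fix \<alpha> assume "\<alpha> \<in> Poly_Mapping.keys p"
    then have vars: "Poly_Mapping.keys \<alpha> \<subseteq> {..m}" and deg: "tdeg \<alpha> = d"
      using assms(4,5) by (auto simp: vars_in_def homog_def)
    have "l1_norm \<sigma> (?mon \<alpha>) \<le> L ^ tdeg \<alpha>"
      by (rule l1_norm_monomial_subst_le[OF assms(1,3) vars assms(6)])
    then have "l1_norm \<sigma> (?mon \<alpha>) \<le> L ^ d" by (simp only: deg)
    moreover have "l1_norm \<sigma> (Const (?c \<alpha>) * ?mon \<alpha>) \<le> norm (\<sigma> (?c \<alpha>)) * l1_norm \<sigma> (?mon \<alpha>)"
      using l1_norm_mult[OF coeffs_in_single[OF cK] monK] by (simp add: Const_def l1_norm_single)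
    ultimately show "l1_norm \<sigma> (Const (?c \<alpha>) * ?mon \<alpha>) \<le> norm (\<sigma> (?c \<alpha>)) * L ^ d"
      by (meson mult_left_mono norm_ge_zero order_trans)
  qed
  also have "\<dots> = l1_norm \<sigma> p * L ^ d"
    by (simp add: l1_norm_def sum_distrib_right)
  finally show ?thesis .
qed

lemma sum_power_Suc_shift: "(\<Sum>i<Suc (Suc n). D ^ i) = 1 + D * (\<Sum>i<Suc n. (D::nat) ^ i)"
  by (simp add: sum.lessThan_Suc_shift sum_distrib_left del: sum.lessThan_Suc)

lemma l1_norm_foldl_comp_map_le:
  fixes S :: "pmap set" and B :: real and D :: nat
  assumes hom: "ring_hom_on K \<sigma>"
    and forms: "\<And>F. F \<in> S \<Longrightarrow> \<exists>d\<le>D. hom_rep m d F"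
    and coeffs: "\<And>F j. F \<in> S \<Longrightarrow> coeffs_in K (F j)"
    and norms: "\<And>F j. F \<in> S \<Longrightarrow> j \<le> m \<Longrightarrow> l1_norm \<sigma> (F j) \<le> B"
    and "1 \<le> B" "F0 \<in> S" "set Fs \<subseteq> S"
  shows "(\<forall>j. coeffs_in K (foldl (\<lambda>acc G. comp_map G acc) F0 Fs j)) \<and>
    (\<forall>j\<le>m. l1_norm \<sigma> (foldl (\<lambda>acc G. comp_map G acc) F0 Fs j) \<le> B ^ (\<Sum>i<Suc (length Fs). D ^ i))"
  using \<open>set Fs \<subseteq> S\<close>
proof (induction Fs rule: rev_induct)
  case Nil
  then show ?case using coeffs norms \<open>F0 \<in> S\<close> by simp
next
  case (snoc G Fs)
  define F where "F = foldl (\<lambda>acc G. comp_map G acc) F0 Fs"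
  define s where "s = (\<Sum>i<Suc (length Fs). D ^ i)"
  have G: "G \<in> S" and IH: "\<forall>j. coeffs_in K (F j)" "\<forall>j\<le>m. l1_norm \<sigma> (F j) \<le> B ^ s"
    using snoc by (auto simp: F_def s_def)
  obtain d where "d \<le> D" and G_form: "\<forall>j\<le>m. vars_in m (G j) \<and> homog d (G j)"
    using forms[OF G] by (auto simp: hom_rep_def)
  have "l1_norm \<sigma> (comp_map G F j) \<le> B ^ (1 + D * s)" if "j \<le> m" for j
  proof -
    have "l1_norm \<sigma> (comp_map G F j) \<le> l1_norm \<sigma> (G j) * (B ^ s) ^ d"
      unfolding comp_map_def using G_form that IH
      by (intro l1_norm_subst_le[OF hom coeffs[OF G]]) auto
    also have "\<dots> \<le> B * (B ^ s) ^ D"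
      using norms[OF G that] \<open>d \<le> D\<close> \<open>1 \<le> B\<close>
      by (intro mult_mono power_increasing one_le_power) auto
    also have "\<dots> = B ^ (1 + D * s)"
      by (simp add: power_mult[symmetric] mult.commute)
    finally show ?thesis .
  qed
  moreover have "coeffs_in K (comp_map G F j)" for j
    unfolding comp_map_def using IH(1) by (intro coeffs_in_subst[OF hom coeffs[OF G]]) auto
  moreover have "foldl (\<lambda>acc G. comp_map G acc) F0 (Fs @ [G]) = comp_map G F"
    by (simp add: F_def)
  moreover have "(\<Sum>i<Suc (length (Fs @ [G])). D ^ i) = 1 + D * s"
    unfolding s_def length_append_singleton by (rule sum_power_Suc_shift)
  ultimately show ?case
    by simp
qed

lemma map_absv_nonneg: "0 \<le> map_absv K \<sigma> m F"
  unfolding map_absv_def poly_absv_def by (auto simp: Max_ge_iff)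

lemma ln_map_absv_le:
  assumes "ring_hom_on K \<sigma>" "1 \<le> L" "\<And>j. j \<le> m \<Longrightarrow> l1_norm \<sigma> (F j) \<le> L"
  shows "ln (map_absv K \<sigma> m F) \<le> real (local_deg K \<sigma>) / real (field_degree K) * ln L"
proof -
  interpret ring_hom_on K \<sigma> by fact
  let ?e = "real (local_deg K \<sigma>) / real (field_degree K)"
  have "absv K \<sigma> (Poly_Mapping.lookup (F j) \<alpha>) \<le> L powr ?e" if "j \<le> m" for j \<alpha>
    unfolding absv_def using coeff_le_l1_norm[of "F j" \<alpha>] assms(3)[OF that]
    by (intro powr_mono2) auto
  then have le: "map_absv K \<sigma> m F \<le> L powr ?e"
    unfolding map_absv_def poly_absv_def by auto
  show ?thesis
  proof (cases "map_absv K \<sigma> m F = 0")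
    case False
    then have "ln (map_absv K \<sigma> m F) \<le> ln (L powr ?e)"
      using le map_absv_nonneg[of K \<sigma> m F] \<open>1 \<le> L\<close> by (subst ln_le_cancel_iff) auto
    then show ?thesis using \<open>1 \<le> L\<close> by simp
  qed (use \<open>1 \<le> L\<close> in simp)
qed

lemma exists_coeff_bound:
  fixes S :: "pmap set" and e M :: real
  assumes "ring_hom_on K \<sigma>" "finite S" "0 \<le> e" "1 \<le> M"
    and "\<And>F j \<alpha>. F \<in> S \<Longrightarrow> j \<le> m \<Longrightarrow> cmod (\<sigma> (Poly_Mapping.lookup (F j) \<alpha>)) powr e \<le> M"
  obtains C where "1 \<le> C" "e * ln C \<le> ln M"
    "\<And>F j \<alpha>. F \<in> S \<Longrightarrow> j \<le> m \<Longrightarrow> cmod (\<sigma> (Poly_Mapping.lookup (F j) \<alpha>)) \<le> C"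
proof (cases "e = 0")
  case True
  interpret ring_hom_on K \<sigma> by fact
  \<comment> \<open>For \<open>e = 0\<close> the constraint \<open>e * ln C \<le> ln M\<close> is vacuous, so any common bound works.\<close>
  define C where "C = Max (insert 1 ((\<lambda>(F, j). l1_norm \<sigma> (F j)) ` (S \<times> {..m})))"
  have "l1_norm \<sigma> (F j) \<le> C" if "F \<in> S" "j \<le> m" for F j
    unfolding C_def using \<open>finite S\<close> that by (intro Max_ge) auto
  then show ?thesis
    using True \<open>1 \<le> M\<close> \<open>finite S\<close>
    by (intro that[of C]) (auto simp: C_def intro: order_trans[OF coeff_le_l1_norm])
next
  case False
  then have "0 < e" using \<open>0 \<le> e\<close> by simp
  show ?thesis
  proof (rule that[of "M powr (1 / e)"])
    show "1 \<le> M powr (1 / e)" using \<open>1 \<le> M\<close> \<open>0 < e\<close> by (simp add: ge_one_powr_ge_zero)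
    show "e * ln (M powr (1 / e)) \<le> ln M" using \<open>1 \<le> M\<close> \<open>0 < e\<close> by simp
    fix F j \<alpha> assume "F \<in> S" "j \<le> m"
    then have "(cmod (\<sigma> (Poly_Mapping.lookup (F j) \<alpha>)) powr e) powr (1 / e) \<le> M powr (1 / e)"
      using assms(5) \<open>0 < e\<close> by (intro powr_mono2) auto
    then show "cmod (\<sigma> (Poly_Mapping.lookup (F j) \<alpha>)) \<le> M powr (1 / e)"
      using \<open>0 < e\<close> by (simp add: powr_powr)
  qed
qed

lemma sum_power_le_power_minus_one:
  fixes d :: real
  assumes "2 \<le> d"
  shows "(\<Sum>i<n. d ^ i) \<le> d ^ n - 1"
proof (induction n)
  case (Suc n)
  have "2 * d ^ n \<le> d * d ^ n" using assms by (intro mult_right_mono) auto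
  with Suc show ?case by simp
qed simp

lemma log_height_bound_arith:
  fixes d x s e lM lC :: real and m :: nat
  assumes "2 \<le> d" "2 \<le> x" "1 \<le> m" "0 \<le> e" "e \<le> 2" "0 \<le> s" "s \<le> x - 1"
    and "e * lC \<le> lM" "0 \<le> lM"
  shows "e * (s * (m * ln (d + 1) + lC)) \<le> 2 * lM * x + ln (m * d ^ m) * x ^ 2"
proof -
  have "2 * d \<le> d * d" using assms(1) by (intro mult_right_mono) auto
  then have "d + 1 \<le> d ^ 2" using assms(1) unfolding power2_eq_square by linarith
  then have "ln (d + 1) \<le> ln (d ^ 2)" using assms(1) by simp
  then have ln_d1: "ln (d + 1) \<le> 2 * ln d" using assms(1) by (simp add: ln_realpow)
  have "e * (s * (m * ln (d + 1))) \<le> 2 * ((x - 1) * (m * (2 * ln d)))"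
    using assms ln_d1 by (intro mult_mono) auto
  also have "\<dots> = (m * ln d) * (4 * (x - 1))" by simp
  also have "\<dots> \<le> (m * ln d) * x ^ 2"
  proof (rule mult_left_mono)
    have "0 \<le> (x - 2) ^ 2" by simp
    then show "4 * (x - 1) \<le> x ^ 2" by (simp add: power2_eq_square algebra_simps)
  qed (use assms(1) in simp)
  finally have degree_part: "e * (s * (m * ln (d + 1))) \<le> m * ln d * x ^ 2" .
  have "e * (s * lC) = s * (e * lC)" by simp
  also have "\<dots> \<le> s * lM" using assms(6,8) by (rule mult_left_mono[rotated])
  also have "\<dots> \<le> 2 * lM * x" using assms(2,6,7,9) mult_right_mono[of s "2 * x" lM] by (simp add: mult_ac)
  finally have coeff_part: "e * (s * lC) \<le> 2 * lM * x" .
  have "ln (m * d ^ m) = ln m + m * ln d" using assms(1,3) by (simp add: ln_mult ln_realpow)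
  moreover have "0 \<le> ln m * x ^ 2" using assms(3) by simp
  ultimately show ?thesis using degree_part coeff_part by (simp add: algebra_simps)
qed

lemma l1_norm_hom_rep_le:
  fixes C :: real
  assumes "hom_rep m d F" "d \<le> D" "j \<le> m" "0 \<le> C"
    and "\<And>\<alpha>. norm (\<sigma> (Poly_Mapping.lookup (F j) \<alpha>)) \<le> C"
  shows "l1_norm \<sigma> (F j) \<le> real ((D + 1) ^ m) * C"
proof -
  have "card (Poly_Mapping.keys (F j)) \<le> (d + 1) ^ m"
    using assms(1,3) by (intro card_keys_homog_le) (auto simp: hom_rep_def)
  also have "\<dots> \<le> (D + 1) ^ m"
    using assms(2) by (intro power_mono) auto
  finally have "real (card (Poly_Mapping.keys (F j))) * C \<le> real ((D + 1) ^ m) * C"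
    using assms(4) by (intro mult_right_mono) (auto simp del: of_nat_power)
  moreover have "l1_norm \<sigma> (F j) \<le> real (card (Poly_Mapping.keys (F j))) * C"
    using assms(5) by (rule l1_norm_le_card_keys_mult)
  ultimately show ?thesis by linarith
qed

\<comment> \<open>\<open>field_degree\<close> is a \<open>THE\<close>-term and may be \<open>0\<close>, in which case the quotient is \<open>0\<close>.\<close>
lemma local_deg_div_field_degree_le_two: "real (local_deg K \<sigma>) / real (field_degree K) \<le> 2"
  by (cases "field_degree K = 0") (auto simp: local_deg_def field_simps)

lemma ln_map_absv_foldl_comp_map_le:
  fixes S :: "pmap set" and M :: real and D :: nat
  assumes hom: "ring_hom_on K \<sigma>" and "finite S" "1 \<le> m" "2 \<le> D" "1 \<le> M"
    and forms: "\<And>F. F \<in> S \<Longrightarrow> \<exists>d\<le>D. hom_rep m d F"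
    and coeffs: "\<And>F j. F \<in> S \<Longrightarrow> coeffs_in K (F j)"
    and absv_le: "\<And>F j \<alpha>. F \<in> S \<Longrightarrow> j \<le> m \<Longrightarrow> absv K \<sigma> (Poly_Mapping.lookup (F j) \<alpha>) \<le> M"
    and "F0 \<in> S" "set Fs \<subseteq> S"
  shows "ln (map_absv K \<sigma> m (foldl (\<lambda>acc G. comp_map G acc) F0 Fs))
    \<le> 2 * ln M * real D ^ Suc (length Fs) + ln (real m * real D ^ m) * real D ^ (2 * Suc (length Fs))"
proof -
  interpret ring_hom_on K \<sigma> by fact
  define e where "e = real (local_deg K \<sigma>) / real (field_degree K)"
  have "0 \<le> e" "e \<le> 2"
    unfolding e_def by (simp_all add: local_deg_div_field_degree_le_two)
  obtain C where "1 \<le> C" "e * ln C \<le> ln M"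
    and C: "\<And>F j \<alpha>. F \<in> S \<Longrightarrow> j \<le> m \<Longrightarrow> cmod (\<sigma> (Poly_Mapping.lookup (F j) \<alpha>)) \<le> C"
    using exists_coeff_bound[OF hom \<open>finite S\<close> \<open>0 \<le> e\<close> \<open>1 \<le> M\<close>] absv_le
    unfolding absv_def e_def by blast
  define B where "B = real ((D + 1) ^ m) * C"
  have "1 \<le> (real D + 1) ^ m" by (rule one_le_power) simp
  then have "1 * 1 \<le> B" unfolding B_def using \<open>1 \<le> C\<close> by (intro mult_mono) auto
  then have "1 \<le> B" by simp
  have norms: "l1_norm \<sigma> (F j) \<le> B" if "F \<in> S" "j \<le> m" for F j
  proof -
    obtain d where "hom_rep m d F" "d \<le> D" using forms[OF \<open>F \<in> S\<close>] by blast
    then show ?thesis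
      unfolding B_def using C[OF that] \<open>1 \<le> C\<close> \<open>j \<le> m\<close> by (intro l1_norm_hom_rep_le) auto
  qed
  define s where "s = (\<Sum>i<Suc (length Fs). D ^ i)"
  have "(\<forall>j. coeffs_in K (foldl (\<lambda>acc G. comp_map G acc) F0 Fs j)) \<and>
      (\<forall>j\<le>m. l1_norm \<sigma> (foldl (\<lambda>acc G. comp_map G acc) F0 Fs j) \<le> B ^ s)"
    unfolding s_def
    by (rule l1_norm_foldl_comp_map_le[where S = S])
      (use hom forms coeffs norms \<open>1 \<le> B\<close> \<open>F0 \<in> S\<close> \<open>set Fs \<subseteq> S\<close> in blast)+
  then have "ln (map_absv K \<sigma> m (foldl (\<lambda>acc G. comp_map G acc) F0 Fs)) \<le> e * ln (B ^ s)"
    unfolding e_def using \<open>1 \<le> B\<close> by (intro ln_map_absv_le[OF hom]) (auto simp del: of_nat_power)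
  also have "\<dots> = e * (real s * (real m * ln (real D + 1) + ln C))"
    unfolding B_def using \<open>1 \<le> C\<close> by (simp add: ln_realpow ln_mult)
  also have "\<dots> \<le> 2 * ln M * real D ^ Suc (length Fs) + ln (real m * real D ^ m) * (real D ^ Suc (length Fs)) ^ 2"
  proof (rule log_height_bound_arith)
    have "real s = (\<Sum>i<Suc (length Fs). real D ^ i)" by (simp add: s_def)
    also have "\<dots> \<le> real D ^ Suc (length Fs) - 1"
      using \<open>2 \<le> D\<close> by (intro sum_power_le_power_minus_one) simp
    finally show "real s \<le> real D ^ Suc (length Fs) - 1" .
    have "real D \<le> real D ^ Suc (length Fs)"
      using power_increasing[of 1 "Suc (length Fs)" "real D"] \<open>2 \<le> D\<close> by simp
    then show "2 \<le> real D ^ Suc (length Fs)"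
      using \<open>2 \<le> D\<close> by linarith
  qed (use \<open>1 \<le> m\<close> \<open>2 \<le> D\<close> \<open>0 \<le> e\<close> \<open>e \<le> 2\<close> \<open>e * ln C \<le> ln M\<close> \<open>1 \<le> M\<close> in auto)
  also have "(real D ^ Suc (length Fs)) ^ 2 = real D ^ (2 * Suc (length Fs))"
    by (metis power_mult mult.commute)
  finally show ?thesis .
qed

lemma ring_hom_on_gen_field:
  assumes "field_emb (gen_field A) \<sigma>"
  shows "ring_hom_on (gen_field A) \<sigma>"
  using assms unfolding field_emb_def gen_field_def is_subfield_def
  by unfold_locales auto

lemma coeffs_in_gen_field_coeffs:
  assumes "F \<in> S" "\<And>j. m < j \<Longrightarrow> F j = 0"
  shows "coeffs_in (gen_field (coeffs m S)) (F j)"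
  unfolding coeffs_in_def
proof
  fix \<alpha>
  have "0 \<in> gen_field (coeffs m S)" "coeffs m S \<subseteq> gen_field (coeffs m S)"
    unfolding gen_field_def is_subfield_def by auto
  then show "Poly_Mapping.lookup (F j) \<alpha> \<in> gen_field (coeffs m S)"
    using assms unfolding coeffs_def
    by (cases "j \<le> m"; cases "\<alpha> \<in> Poly_Mapping.keys (F j)") (auto simp: in_keys_iff)
qed

lemma map_deg_eqI:
  assumes "hom_rep m d F"
  shows "map_deg m F = d"
  unfolding map_deg_def
proof (rule the_equality)
  fix d' assume "hom_rep m d' F"
  obtain j \<alpha> where "j \<le> m" "\<alpha> \<in> Poly_Mapping.keys (F j)"
    using assms by (auto simp: hom_rep_def simp flip: keys_eq_empty)
  then show "d' = d"
    using assms \<open>hom_rep m d' F\<close> by (auto simp: hom_rep_def homog_def)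
qed (fact assms)

lemma birational_hom_rep_le_Max_map_deg:
  assumes "finite S" "F \<in> S" "birational m F"
  shows "\<exists>d\<le>Max (insert 2 (map_deg m ` S)). hom_rep m d F"
proof -
  obtain d where "hom_rep m d F" using assms(3) by (auto simp: birational_def)
  moreover have "map_deg m F \<le> Max (insert 2 (map_deg m ` S))" using assms(1,2) by (intro Max_ge) auto
  ultimately show ?thesis by (auto simp: map_deg_eqI)
qed

lemma absv_coeff_le_Max_map_absv:
  assumes "\<sigma> 0 = 0" "finite S" "F \<in> S" "j \<le> m"
  shows "absv K \<sigma> (Poly_Mapping.lookup (F j) \<alpha>) \<le> Max ((\<lambda>F. map_absv K \<sigma> m F) ` S)"
proof -
  have "absv K \<sigma> (Poly_Mapping.lookup (F j) \<alpha>) \<le> poly_absv K \<sigma> (F j)"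
    using assms(1) unfolding poly_absv_def
    by (cases "\<alpha> \<in> Poly_Mapping.keys (F j)") (auto simp: in_keys_iff absv_def)
  also have "\<dots> \<le> map_absv K \<sigma> m F"
    unfolding map_absv_def using assms(4) by (intro Max_ge) auto
  also have "\<dots> \<le> Max ((\<lambda>F. map_absv K \<sigma> m F) ` S)"
    using assms(2,3) by (intro Max_ge) auto
  finally show ?thesis .
qed

theorem lemma3p7:
  fixes m :: nat and S :: "pmap set" and \<sigma> :: "complex \<Rightarrow> complex" and gs :: "pmap list"
  assumes "m \<ge> 1"
    and "finite S"
    and "\<forall>F\<in>S. birational m F"
    and "symmetric_set m S"
    and "\<forall>F\<in>S. normalized m F"
    and "\<forall>c\<in>coeffs m S. algebraic c"
    and "field_emb (gen_field (coeffs m S)) \<sigma>"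
    and "gs \<noteq> []" and "set gs \<subseteq> S"
  shows "let K = gen_field (coeffs m S);
             M = Max ((\<lambda>F. map_absv K \<sigma> m F) ` S);
             dS = Max (insert 2 (map_deg m ` S));
             l = length gs;
             w = foldl (\<lambda>acc g. comp_map g acc) (hd gs) (tl gs)
         in ln (map_absv K \<sigma> m w)
              \<le> 2 * ln M * real dS ^ l + ln (real m * real dS ^ m) * real dS ^ (2 * l)"
proof -
  define K where "K = gen_field (coeffs m S)"
  define M where "M = Max ((\<lambda>F. map_absv K \<sigma> m F) ` S)"
  define dS where "dS = Max (insert 2 (map_deg m ` S))"
  interpret ring_hom_on K \<sigma>
    unfolding K_def using assms(7) by (rule ring_hom_on_gen_field)
  have forms: "\<exists>d\<le>dS. hom_rep m d F" if "F \<in> S" for F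
    unfolding dS_def using assms(2,3) that by (intro birational_hom_rep_le_Max_map_deg) auto
  have coeffs: "coeffs_in K (F j)" if "F \<in> S" for F j
    unfolding K_def using that forms[OF that] by (intro coeffs_in_gen_field_coeffs) (auto simp: hom_rep_def)
  have absv_le: "absv K \<sigma> (Poly_Mapping.lookup (F j) \<alpha>) \<le> M" if "F \<in> S" "j \<le> m" for F j \<alpha>
    unfolding M_def using hom_zero assms(2) that by (rule absv_coeff_le_Max_map_absv)
  obtain F j \<alpha> where "F \<in> S" "j \<le> m" "Poly_Mapping.lookup (F j) \<alpha> = 1"
    using assms(5,8,9) by (cases gs) (auto simp: normalized_def)
  then have "1 \<le> M"
    using absv_le[of F j \<alpha>] by (simp add: absv_def hom_one)
  have "2 \<le> dS" unfolding dS_def using assms(2) by (intro Max_ge) auto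
  have "hd gs \<in> S" "set (tl gs) \<subseteq> S" "Suc (length (tl gs)) = length gs"
    using assms(8,9) by (cases gs; auto)+
  moreover have "ln (map_absv K \<sigma> m (foldl (\<lambda>acc g. comp_map g acc) (hd gs) (tl gs)))
      \<le> 2 * ln M * real dS ^ Suc (length (tl gs))
        + ln (real m * real dS ^ m) * real dS ^ (2 * Suc (length (tl gs)))"
    by (rule ln_map_absv_foldl_comp_map_le[where S = S])
      (use ring_hom_on_axioms assms(1,2) \<open>2 \<le> dS\<close> \<open>1 \<le> M\<close> forms coeffs absv_le
        \<open>hd gs \<in> S\<close> \<open>set (tl gs) \<subseteq> S\<close> in blast)+
  ultimately show ?thesis
    unfolding Let_def K_def[symmetric] M_def[symmetric] dS_def[symmetric] by simp
qed

end
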